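(* Let $\omega_N=\{x_1,\dots,x_N\}\subset\mathbb{S}^2\setminus\{(0,0,1)\}$ be pairwise distinct points, $z_i=\pi_{\mathbb{S}^2}(x_i)$, and $p_N(x)=\prod_{i=1}^N(x-z_i)$. Then $$\mathcal{E}_{\log}(\omega_N)=\sum_{i=1}^N\log\mu_{\rm norm}(p_N,z_i)+N\log\Big(\frac{\prod_{i=1}^N\sqrt{1+|z_i|^2}}{\|p_N\|}\Big)-N^2\log 2-\frac{N\log N}{2}+N\log 2.$$
   Context: $\mathbb{S}^2$ is the unit sphere in $\mathbb{R}^3$; $\pi_{\mathbb{S}^2}(a,b,c)=\frac{a+ib}{1-c}$. $\mathcal{E}_{\log}(\{x_1,\dots,x_N\})=-\sum_{i\ne j}\log\|x_i-x_j\|$. $\|\sum_{i=0}^N a_iz^i\|=(\sum_i\binom{N}{i}^{-1}|a_i|^2)^{1/2}$ is the Bombieri–Weyl norm, and for a root $z$ of degree-$N$ polynomial $P$, $\mu_{\rm norm}(P,z)=N^{1/2}\|P\|(1+|z|^2)^{N/2-1}/|P'(z)|$. *)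

theory Defs
  imports "HOL-Analysis.Analysis" "HOL-Computational_Algebra.Polynomial"
begin

definition sphere2 :: "(real^3) set" where
  "sphere2 = {x. norm x = 1}"

definition north_pole :: "real^3" where
  "north_pole = vector [0, 0, 1]"

definition stereo :: "real^3 \<Rightarrow> complex" where
  "stereo x = Complex (x$1) (x$2) / complex_of_real (1 - x$3)"

definition E_log :: "nat \<Rightarrow> (nat \<Rightarrow> real^3) \<Rightarrow> real" where
  "E_log N x = - (\<Sum>i<N. \<Sum>j<N. if i \<noteq> j then ln (dist (x i) (x j)) else 0)"

(* Bombieri-Weyl norm of a polynomial regarded as of degree N *)
definition bw_norm :: "nat \<Rightarrow> complex poly \<Rightarrow> real" where
  "bw_norm N P = sqrt (\<Sum>i\<le>N. (cmod (coeff P i))^2 / real (N choose i))"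

definition mu_norm :: "nat \<Rightarrow> complex poly \<Rightarrow> complex \<Rightarrow> real" where
  "mu_norm N P z = sqrt (real N) * bw_norm N P * (1 + (cmod z)^2) powr (real N / 2 - 1)
      / cmod (poly (pderiv P) z)"

end

theory Submission
  imports Defs
begin

text \<open>Stereographic projection multiplies chordal distances by a conformal factor:
  \<open>\<parallel>x - y\<parallel> = 2 \<bar>z - w\<bar> / (\<surd>(1+\<bar>z\<bar>\<^sup>2) \<surd>(1+\<bar>w\<bar>\<^sup>2))\<close> for \<open>z, w\<close> the images of \<open>x, y\<close>.
  Taking logarithms, the energy becomes \<open>N(N-1) log 2\<close> plus the logarithms of the
  pairwise differences \<open>z\<^sub>i - z\<^sub>j\<close> minus \<open>(N-1) \<Sum> log \<surd>(1+\<bar>z\<^sub>i\<bar>\<^sup>2)\<close>.  For the monic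
  polynomial with roots \<open>z\<^sub>i\<close>, \<open>p'(z\<^sub>i) = \<Prod>\<^sub>j\<^sub>\<noteq>\<^sub>i (z\<^sub>i - z\<^sub>j)\<close>, so the pairwise differences are
  exactly what the condition numbers \<open>\<mu>\<^sub>n\<^sub>o\<^sub>r\<^sub>m(p, z\<^sub>i)\<close> measure; the rest is bookkeeping.\<close>

lemma norm_vec3_power2:
  fixes x :: "real^3"
  shows "(norm x)^2 = (x$1)^2 + (x$2)^2 + (x$3)^2"
  unfolding power2_norm_eq_inner by (simp add: inner_vec_def sum_3 power2_eq_square)

lemma sphere2_minus_north_pole_coords:
  assumes "x \<in> sphere2 - {north_pole}"
  shows "(x$1)^2 + (x$2)^2 + (x$3)^2 = 1" and "x$3 < 1"
proof -
  show unit: "(x$1)^2 + (x$2)^2 + (x$3)^2 = 1"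
    using assms norm_vec3_power2[of x] by (simp add: sphere2_def)
  show "x$3 < 1"
  proof (rule ccontr)
    assume "\<not> x$3 < 1"
    then have "(x$3)^2 \<ge> 1" by (simp add: one_le_power)
    moreover have "(x$1)^2 \<ge> 0" "(x$2)^2 \<ge> 0" by simp_all
    ultimately have "(x$1)^2 = 0" "(x$2)^2 = 0" "(x$3)^2 = 1" using unit by linarith+
    then have "x = north_pole"
      using \<open>\<not> x$3 < 1\<close> by (simp add: power2_eq_1_iff north_pole_def vec_eq_iff forall_3)
    with assms show False by simp
  qed
qed

lemma stereo_eq_Complex:
  "x$3 < 1 \<Longrightarrow> stereo x = Complex (x$1 / (1 - x$3)) (x$2 / (1 - x$3))"
  by (simp add: stereo_def complex_eq_iff Re_divide Im_divide power2_eq_square)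

lemma one_plus_norm_stereo_power2:
  assumes "x \<in> sphere2 - {north_pole}"
  shows "1 + (cmod (stereo x))^2 = 2 / (1 - x$3)"
proof -
  note unit = sphere2_minus_north_pole_coords[OF assms]
  have "(cmod (stereo x))^2 = ((x$1)^2 + (x$2)^2) / (1 - x$3)^2"
    using unit(2) by (simp add: stereo_eq_Complex cmod_power2 power_divide add_divide_distrib)
  also have "\<dots> = ((1 - x$3) * (1 + x$3)) / ((1 - x$3) * (1 - x$3))"
    using unit(1) by (simp add: algebra_simps power2_eq_square)
  also have "\<dots> = (1 + x$3) / (1 - x$3)"
    using unit(2) by simp
  finally show ?thesis
    using unit(2) by (simp add: field_simps)
qed

text \<open>With \<open>u = 1 - c\<close>, \<open>v = 1 - c'\<close> and \<open>a\<^sup>2 + b\<^sup>2 = u (2 - u)\<close>, both sides expand to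
  \<open>2 (u + v - u v) - 2 (a a' + b b')\<close>.\<close>

lemma chordal_dist_power2_coords:
  fixes a b c a' b' c' :: real
  assumes "a^2 + b^2 + c^2 = 1" "a'^2 + b'^2 + c'^2 = 1" "c < 1" "c' < 1"
  shows "(a - a')^2 + (b - b')^2 + (c - c')^2
       = (1 - c) * (1 - c') * ((a/(1-c) - a'/(1-c'))^2 + (b/(1-c) - b'/(1-c'))^2)"
proof -
  have expand: "u * v * ((a/u - a'/v)^2 + (b/u - b'/v)^2)
      = (a^2 + b^2) * (v/u) + (a'^2 + b'^2) * (u/v) - 2 * (a * a' + b * b')"
    if "u \<noteq> 0" "v \<noteq> 0" for u v :: real
    using that by (simp add: power2_diff power_divide) (simp add: field_simps power2_eq_square)
  have u: "1 - c \<noteq> 0" and v: "1 - c' \<noteq> 0" using assms(3,4) by auto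
  have ab: "a^2 + b^2 = (1 - c) * (1 + c)" and ab': "a'^2 + b'^2 = (1 - c') * (1 + c')"
    using assms(1,2) by (simp_all add: algebra_simps power2_eq_square)
  have "(1 - c) * (1 - c') * ((a/(1-c) - a'/(1-c'))^2 + (b/(1-c) - b'/(1-c'))^2)
      = (1 + c) * (1 - c') + (1 + c') * (1 - c) - 2 * (a * a' + b * b')"
    using u v by (simp add: expand[OF u v] ab ab')
  then show ?thesis
    using assms(1,2) by (simp add: algebra_simps power2_eq_square)
qed

lemma dist_eq_stereo:
  assumes "x \<in> sphere2 - {north_pole}" "y \<in> sphere2 - {north_pole}"
  shows "dist x y = 2 * cmod (stereo x - stereo y) /
     (sqrt (1 + (cmod (stereo x))^2) * sqrt (1 + (cmod (stereo y))^2))"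
proof -
  note fx = sphere2_minus_north_pole_coords[OF assms(1)]
    and fy = sphere2_minus_north_pole_coords[OF assms(2)]
  define u where "u = 1 - x$3"
  define v where "v = 1 - y$3"
  have "u > 0" "v > 0" using fx fy by (auto simp: u_def v_def)
  have "(dist x y)^2 = (x$1 - y$1)^2 + (x$2 - y$2)^2 + (x$3 - y$3)^2"
    using norm_vec3_power2[of "x - y"] by (simp add: dist_norm)
  also have "\<dots> = u * v * (cmod (stereo x - stereo y))^2"
    using chordal_dist_power2_coords[OF fx(1) fy(1) fx(2) fy(2)] fx(2) fy(2)
    by (simp add: stereo_eq_Complex cmod_power2 u_def v_def)
  also have "\<dots> = (2 * cmod (stereo x - stereo y) / (sqrt (2/u) * sqrt (2/v)))^2"
    using \<open>u > 0\<close> \<open>v > 0\<close> by (simp add: power_divide power_mult_distrib field_simps)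
  finally have "(dist x y)^2 = (2 * cmod (stereo x - stereo y) /
     (sqrt (1 + (cmod (stereo x))^2) * sqrt (1 + (cmod (stereo y))^2)))^2"
    using one_plus_norm_stereo_power2[OF assms(1)] one_plus_norm_stereo_power2[OF assms(2)]
    by (simp add: u_def v_def)
  then show ?thesis
    by (rule power2_eq_imp_eq) simp_all
qed

lemma poly_pderiv_prod_linear_at_root:
  fixes w :: "nat \<Rightarrow> 'a :: idom"
  assumes "i < N"
  shows "poly (pderiv (\<Prod>j<N. [:- w j, 1:])) (w i) = (\<Prod>j\<in>{..<N} - {i}. w i - w j)"
proof -
  have "pderiv (\<Prod>j<N. [:- w j, 1:]) = (\<Sum>k<N. \<Prod>j\<in>{..<N} - {k}. [:- w j, 1:])"
    by (simp add: pderiv_prod pderiv_pCons)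
  then have "poly (pderiv (\<Prod>j<N. [:- w j, 1:])) (w i)
      = (\<Sum>k<N. \<Prod>j\<in>{..<N} - {k}. w i - w j)"
    by (simp add: poly_sum poly_prod)
  also have "\<dots> = (\<Prod>j\<in>{..<N} - {i}. w i - w j)"
  proof -
    have "(\<Sum>k\<in>{..<N} - {i}. \<Prod>j\<in>{..<N} - {k}. w i - w j) = 0"
      by (intro sum.neutral ballI prod_zero) (use assms in auto)
    then show ?thesis
      using assms by (simp add: sum.remove)
  qed
  finally show ?thesis .
qed

lemma bw_norm_ge_1:
  assumes "coeff P N = 1"
  shows "bw_norm N P \<ge> 1"
proof -
  have "(cmod (coeff P N))^2 / real (N choose N) \<le> (\<Sum>i\<le>N. (cmod (coeff P i))^2 / real (N choose i))"
    by (rule member_le_sum) auto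
  then show ?thesis
    using assms by (simp add: bw_norm_def)
qed

lemma coeff_prod_linear_degree:
  fixes w :: "nat \<Rightarrow> 'a :: idom"
  shows "coeff (\<Prod>j<N. [:- w j, 1:]) N = 1"
proof -
  have "degree (\<Prod>j<N. [:- w j, 1:]) = N"
    by (subst degree_prod_sum_eq) auto
  moreover have "lead_coeff (\<Prod>j<N. [:- w j, 1:]) = 1"
    by (simp add: lead_coeff_prod)
  ultimately show ?thesis by simp
qed

lemma ln_mu_norm:
  assumes "N > 0" "bw_norm N P > 0" "poly (pderiv P) z \<noteq> 0"
  shows "ln (mu_norm N P z) = ln (real N) / 2 + ln (bw_norm N P)
     + (real N / 2 - 1) * ln (1 + (cmod z)^2) - ln (cmod (poly (pderiv P) z))"
proof -
  have "1 + (cmod z)^2 > 0" by (simp add: add_pos_nonneg)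
  then show ?thesis
    using assms by (simp add: mu_norm_def ln_div ln_mult ln_sqrt ln_powr)
qed

lemma stereo_inj_on_sphere2_minus_north_pole:
  "inj_on stereo (sphere2 - {north_pole})"
proof (rule inj_onI)
  fix x y
  assume "x \<in> sphere2 - {north_pole}" "y \<in> sphere2 - {north_pole}" "stereo x = stereo y"
  then have "dist x y = 0" by (simp add: dist_eq_stereo)
  then show "x = y" by simp
qed

lemma inj_on_stereo_comp:
  assumes "\<And>i. i \<in> A \<Longrightarrow> x i \<in> sphere2 - {north_pole}" and "inj_on x A"
  shows "inj_on (\<lambda>i. stereo (x i)) A"
proof -
  have "x ` A \<subseteq> sphere2 - {north_pole}" using assms(1) by (auto simp: image_subset_iff)
  then show ?thesis
    using comp_inj_on[OF assms(2) inj_on_subset[OF stereo_inj_on_sphere2_minus_north_pole]]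
    by (simp add: o_def)
qed

lemma ln_norm_pderiv_prod_linear_at_root:
  fixes w :: "nat \<Rightarrow> complex"
  assumes "i < N" and distinct: "inj_on w {..<N}"
  shows "ln (cmod (poly (pderiv (\<Prod>j<N. [:- w j, 1:])) (w i)))
       = (\<Sum>j\<in>{..<N} - {i}. ln (cmod (w i - w j)))"
proof -
  have "w i \<noteq> w j" if "j \<in> {..<N} - {i}" for j
    using that assms by (auto dest: inj_onD)
  then show ?thesis
    unfolding poly_pderiv_prod_linear_at_root[OF assms(1)] prod_norm[symmetric] by (subst ln_prod) auto
qed

lemma sum_off_diagonal_symmetric:
  fixes f :: "nat \<Rightarrow> real"
  shows "(\<Sum>i<N. \<Sum>j\<in>{..<N} - {i}. (f i + f j) / 2) = (real N - 1) * (\<Sum>i<N. f i)"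
proof -
  have "(\<Sum>j\<in>{..<N} - {i}. (f i + f j) / 2) = ((real N - 1) * f i + (sum f {..<N} - f i)) / 2"
    if "i < N" for i
    using that by (simp add: sum_divide_distrib[symmetric] sum.distrib sum_diff1)
  then have "(\<Sum>i<N. \<Sum>j\<in>{..<N} - {i}. (f i + f j) / 2)
      = (\<Sum>i<N. ((real N - 1) * f i + (sum f {..<N} - f i)) / 2)"
    by (intro sum.cong) auto
  also have "\<dots> = (real N - 1) * (\<Sum>i<N. f i)"
    by (simp add: sum_divide_distrib[symmetric] sum.distrib sum_subtractf sum_distrib_left[symmetric])
       (simp add: algebra_simps)
  finally show ?thesis .
qed

lemma E_log_eq_stereo:
  assumes on_sphere: "\<And>i. i < N \<Longrightarrow> x i \<in> sphere2 - {north_pole}"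
    and distinct: "inj_on x {..<N}"
  defines "z \<equiv> \<lambda>i. stereo (x i)"
  shows "E_log N x = (real N - 1) * (\<Sum>i<N. ln (1 + (cmod (z i))^2))
     - (\<Sum>i<N. \<Sum>j\<in>{..<N} - {i}. ln (cmod (z i - z j)))
     - real N * (real N - 1) * ln 2"
proof -
  define q where "q i = ln (1 + (cmod (z i))^2)" for i
  have z_distinct: "inj_on z {..<N}"
    unfolding z_def using on_sphere distinct by (rule inj_on_stereo_comp) simp
  have ln_dist: "ln (dist (x i) (x j)) = ln 2 + ln (cmod (z i - z j)) - (q i + q j) / 2"
    if "i < N" "j \<in> {..<N} - {i}" for i j
  proof -
    have "z i \<noteq> z j" using that z_distinct by (auto dest: inj_onD)
    moreover have "dist (x i) (x j)
        = 2 * cmod (z i - z j) / (sqrt (1 + (cmod (z i))^2) * sqrt (1 + (cmod (z j))^2))"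
      using that dist_eq_stereo[OF on_sphere on_sphere] by (simp add: z_def)
    moreover have "0 < 1 + (cmod (z i))^2" "0 < 1 + (cmod (z j))^2"
      by (simp_all add: add_pos_nonneg)
    ultimately show ?thesis
      by (simp add: q_def ln_div ln_mult ln_sqrt add_divide_distrib)
  qed
  have "E_log N x = - (\<Sum>i<N. \<Sum>j\<in>{..<N} - {i}. ln (dist (x i) (x j)))"
    unfolding E_log_def by (simp add: sum.If_cases Diff_eq Compl_eq eq_commute)
  also have "\<dots> = - (\<Sum>i<N. \<Sum>j\<in>{..<N} - {i}. ln 2 + ln (cmod (z i - z j)) - (q i + q j) / 2)"
    by (simp add: ln_dist)
  also have "\<dots> = (real N - 1) * (\<Sum>i<N. q i)
     - (\<Sum>i<N. \<Sum>j\<in>{..<N} - {i}. ln (cmod (z i - z j))) - real N * (real N - 1) * ln 2"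
    by (simp add: sum.distrib sum_subtractf sum_off_diagonal_symmetric)
  finally show ?thesis by (simp add: q_def)
qed

lemma ln_mu_norm_prod_linear_at_root:
  fixes w :: "nat \<Rightarrow> complex"
  assumes "i < N" and distinct: "inj_on w {..<N}"
  defines "P \<equiv> \<Prod>j<N. [:- w j, 1:]"
  shows "ln (mu_norm N P (w i)) = ln (real N) / 2 + ln (bw_norm N P)
     + (real N / 2 - 1) * ln (1 + (cmod (w i))^2) - (\<Sum>j\<in>{..<N} - {i}. ln (cmod (w i - w j)))"
proof -
  have "bw_norm N P \<ge> 1"
    unfolding P_def by (rule bw_norm_ge_1[OF coeff_prod_linear_degree])
  moreover have "poly (pderiv P) (w i) \<noteq> 0"
    using assms by (auto simp: P_def poly_pderiv_prod_linear_at_root dest: inj_onD)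
  ultimately show ?thesis
    using assms ln_norm_pderiv_prod_linear_at_root[OF assms(1,2)] by (simp add: ln_mu_norm)
qed

lemma ln_prod_sqrt_divide:
  fixes f :: "'a \<Rightarrow> real"
  assumes "finite I" "\<And>i. i \<in> I \<Longrightarrow> f i > 0" "B > 0"
  shows "ln ((\<Prod>i\<in>I. sqrt (f i)) / B) = (\<Sum>i\<in>I. ln (f i)) / 2 - ln B"
proof -
  have "ln (\<Prod>i\<in>I. sqrt (f i)) = (\<Sum>i\<in>I. ln (sqrt (f i)))"
    using assms(1,2) by (intro ln_prod) (auto simp: less_le)
  also have "\<dots> = (\<Sum>i\<in>I. ln (f i)) / 2"
    unfolding sum_divide_distrib by (intro sum.cong refl) (simp add: ln_sqrt[OF less_imp_le[OF assms(2)]])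
  moreover have "(\<Prod>i\<in>I. sqrt (f i)) \<noteq> 0"
    using assms(1,2) by (auto simp: less_le)
  ultimately show ?thesis
    using assms(3) by (simp add: ln_div)
qed

theorem lemma4p1:
  fixes N :: nat and x :: "nat \<Rightarrow> real^3"
  assumes "\<And>i. i < N \<Longrightarrow> x i \<in> sphere2 - {north_pole}"
    and "inj_on x {..<N}"
  defines "z \<equiv> (\<lambda>i. stereo (x i))"
    and "p \<equiv> (\<Prod>i<N. [:- stereo (x i), 1:])"
  shows "E_log N x =
     (\<Sum>i<N. ln (mu_norm N p (z i)))
     + real N * ln ((\<Prod>i<N. sqrt (1 + (cmod (z i))^2)) / bw_norm N p)
     - (real N)^2 * ln 2 - real N * ln (real N) / 2 + real N * ln 2"
proof -
  define q where "q i = ln (1 + (cmod (z i))^2)" for i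
  define D where "D i = (\<Sum>j\<in>{..<N} - {i}. ln (cmod (z i - z j)))" for i
  have p_eq: "p = (\<Prod>j<N. [:- z j, 1:])" by (simp add: p_def z_def)
  have z_distinct: "inj_on z {..<N}"
    unfolding z_def using assms(1,2) by (rule inj_on_stereo_comp) simp
  have "bw_norm N p > 0"
    using bw_norm_ge_1[OF coeff_prod_linear_degree] by (simp add: p_eq less_le_trans[OF zero_less_one])
  then have ln_ratio: "ln ((\<Prod>i<N. sqrt (1 + (cmod (z i))^2)) / bw_norm N p)
      = (\<Sum>i<N. q i) / 2 - ln (bw_norm N p)"
    by (simp add: ln_prod_sqrt_divide add_pos_nonneg q_def)
  have ln_mu: "ln (mu_norm N p (z i)) = ln (real N) / 2 + ln (bw_norm N p) + (real N / 2 - 1) * q i - D i"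
    if "i < N" for i
    using ln_mu_norm_prod_linear_at_root[OF that z_distinct] by (simp add: p_eq q_def D_def)
  have "E_log N x = (real N - 1) * (\<Sum>i<N. q i) - (\<Sum>i<N. D i) - real N * (real N - 1) * ln 2"
    using E_log_eq_stereo[OF assms(1,2)] by (simp add: q_def D_def z_def)
  then show ?thesis
    by (simp add: ln_mu ln_ratio sum.distrib sum_subtractf sum_distrib_left[symmetric])
       (simp add: algebra_simps power2_eq_square)
qed

end
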